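(* Let $n\ge 2$, let $A_1\ldots A_n$ be a regular $n$-gon in the coordinate plane whose center is the origin, and let $f(x)$ be the monic polynomial of degree $n$ whose roots, counted with multiplicity, are the abscissas of $A_1,\ldots,A_n$. Then the coefficients of $x^{n-1},x^{n-3},x^{n-5},\ldots$ in $f(x)$ are all zero, except the constant term when $n$ is odd. *)

theory Defs
  imports Complex_Main "HOL-Computational_Algebra.Polynomial"
begin

text \<open>The coordinate plane is identified with the complex plane: the point (x,y) is x + i y,
  so the abscissa of a point z is Re z.\<close>

definition regular_ngon_centered_origin :: "nat \<Rightarrow> (nat \<Rightarrow> complex) \<Rightarrow> bool" where
  "regular_ngon_centered_origin n A \<longleftrightarrow>
     A 1 \<noteq> 0 \<and>
     (\<exists>\<sigma>::real. (\<sigma> = 1 \<or> \<sigma> = -1) \<and>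
        (\<forall>k\<in>{1..n}. A k = A 1 * cis (\<sigma> * 2 * pi * (real k - 1) / real n)))"

end

theory Submission
  imports Defs "HOL-Computational_Algebra.Fundamental_Theorem_Algebra"
begin

text \<open>The vertices are \<open>b z^k\<close> with \<open>z = cis (2 pi / n)\<close>, where \<open>b\<close> is \<open>A 1\<close> or its
  conjugate according to the orientation.  Put \<open>r = |b|\<close> and \<open>y = r cis phi\<close>.  Since
  \<open>(y - c) (y - cnj c) = 2 y (r cos phi - Re c)\<close> whenever \<open>|c| = r\<close>, and the product of the
  \<open>y - b z^k\<close> is \<open>y^n - b^n\<close>, one gets \<open>f (r cos phi) = (r^n cos (n phi) - Re (b^n)) / 2^(n-1)\<close>,
  a Chebyshev polynomial up to its constant term.  As \<open>cos (n (phi + pi)) = (-1)^n cos (n phi)\<close>,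
  the polynomial \<open>f (-x) - (-1)^n f x\<close> is constant on \<open>[-r, r]\<close>, hence constant, and comparing
  coefficients gives the claim.\<close>

lemma prod_diff_nth_roots:
  fixes u w :: complex
  assumes n: "n > 0" and w: "w \<noteq> 0"
  shows "(\<Prod>z\<in>{z. z ^ n = w ^ n}. u - z) = u ^ n - w ^ n"
proof -
  define p where "p = monom (1::complex) n - [:w ^ n:]"
  have poly_p: "poly p z = z ^ n - w ^ n" for z
    by (simp add: p_def poly_monom)
  have pderiv_p: "pderiv p = monom (of_nat n) (n - 1)"
    by (simp add: p_def pderiv_monom pderiv_diff)
  have "rsquarefree p"
    unfolding rsquarefree_roots
  proof (intro allI notI)
    fix a assume "poly p a = 0 \<and> poly (pderiv p) a = 0"
    hence "a ^ n = w ^ n" "of_nat n * a ^ (n - 1) = 0"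
      by (auto simp: poly_p pderiv_p poly_monom)
    thus False using n w by (auto simp: power_0_left split: if_splits)
  qed
  moreover have "lead_coeff p = 1"
  proof -
    have coeff_n: "coeff p n = 1" using n by (cases n) (simp_all add: p_def)
    have "degree p \<le> n"
      unfolding p_def by (rule degree_diff_le) (auto simp: degree_monom_le)
    moreover have "n \<le> degree p" by (rule le_degree) (simp add: coeff_n)
    ultimately show ?thesis using coeff_n by simp
  qed
  ultimately have "(\<Prod>z | poly p z = 0. [:-z, 1:]) = p"
    using complex_poly_decompose_rsquarefree[of p] by simp
  hence "poly (\<Prod>z | poly p z = 0. [:-z, 1:]) u = poly p u" by simp
  thus ?thesis by (simp add: poly_prod poly_p)
qed

lemma prod_diff_rotations:
  fixes u w :: complex
  assumes n: "n > 0"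
  shows "(\<Prod>k<n. u - w * cis (2 * pi * real k / real n)) = u ^ n - w ^ n"
proof (cases "w = 0")
  case True thus ?thesis using n by simp
next
  case False
  have "bij_betw ((*) w) {z. z ^ n = 1} {z. z ^ n = w ^ n}"
  proof (rule bij_betw_imageI)
    show "inj_on ((*) w) {z. z ^ n = 1}" using False by (auto simp: inj_on_def)
    show "(*) w ` {z. z ^ n = 1} = {z. z ^ n = w ^ n}"
    proof safe
      fix z :: complex assume "z ^ n = w ^ n"
      hence "(z / w) ^ n = 1" using False by (simp add: power_divide)
      moreover have "z = w * (z / w)" using False by simp
      ultimately show "z \<in> (*) w ` {z. z ^ n = 1}" by blast
    qed (simp add: power_mult_distrib)
  qed
  hence bij: "bij_betw (\<lambda>k. w * cis (2 * pi * real k / real n)) {..<n} {z. z ^ n = w ^ n}"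
    using bij_betw_trans[OF bij_betw_roots_unity[OF n]] by (simp add: o_def)
  have "(\<Prod>k<n. u - w * cis (2 * pi * real k / real n)) = (\<Prod>z\<in>{z. z ^ n = w ^ n}. u - z)"
    using prod.reindex_bij_betw[OF bij, of "\<lambda>z. u - z"] by simp
  thus ?thesis using prod_diff_nth_roots[OF n False] by simp
qed

lemma diff_mult_diff_cnj_on_circle:
  fixes c :: complex
  assumes "norm c = r"
  shows "(of_real r * cis \<phi> - c) * (of_real r * cis \<phi> - cnj c)
           = 2 * (of_real r * cis \<phi>) * of_real (r * cos \<phi> - Re c)"
proof -
  have Im: "Im c * Im c = r * r - Re c * Re c"
    using assms cmod_power2[of c] by (simp add: power2_eq_square)
  have sin: "sin \<phi> * sin \<phi> = 1 - cos \<phi> * cos \<phi>"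
    using sin_cos_squared_add[of \<phi>] by (simp add: power2_eq_square)
  show ?thesis
    unfolding complex_eq_iff by (simp add: algebra_simps Im sin)
qed

definition abscissa_poly :: "nat \<Rightarrow> complex \<Rightarrow> real poly" where
  "abscissa_poly n b = (\<Prod>k<n. [:- Re (b * cis (2 * pi * real k / real n)), 1:])"

lemma poly_abscissa_poly_cos:
  assumes n: "n > 0" and b: "b \<noteq> 0"
  shows "poly (abscissa_poly n b) (norm b * cos \<phi>)
           = (norm b ^ n * cos (real n * \<phi>) - Re (b ^ n)) / 2 ^ (n - 1)"
proof -
  define r where "r = norm b"
  define c where "c k = b * cis (2 * pi * real k / real n)" for k
  define y where "y = complex_of_real r * cis \<phi>"
  define Y where "Y = complex_of_real (r ^ n) * cis (real n * \<phi>)"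
  have "Y \<noteq> 0" using b by (simp add: Y_def r_def)
  have y_pow: "y ^ n = Y" by (simp add: y_def Y_def power_mult_distrib DeMoivre)
  have factor: "2 * y * complex_of_real (r * cos \<phi> - Re (c k)) = (y - c k) * (y - cnj (c k))" for k
    unfolding y_def by (rule diff_mult_diff_cnj_on_circle[symmetric]) (simp add: c_def r_def norm_mult)
  have conj_prod: "(\<Prod>k<n. y - cnj (c k)) = Y - cnj b ^ n"
  proof -
    have "(\<Prod>k<n. cnj y - c k) = cnj y ^ n - b ^ n"
      unfolding c_def by (rule prod_diff_rotations[OF n])
    hence "cnj (\<Prod>k<n. cnj y - c k) = cnj (cnj y ^ n - b ^ n)" by simp
    thus ?thesis by (simp add: y_pow)
  qed
  have "poly (abscissa_poly n b) (r * cos \<phi>) = (\<Prod>k<n. r * cos \<phi> - Re (c k))"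
    by (simp add: abscissa_poly_def poly_prod c_def algebra_simps)
  hence "2 ^ n * Y * complex_of_real (poly (abscissa_poly n b) (r * cos \<phi>))
          = (\<Prod>k<n. 2 * y * complex_of_real (r * cos \<phi> - Re (c k)))"
    by (simp add: of_real_prod prod.distrib power_mult_distrib y_pow)
  also have "\<dots> = (\<Prod>k<n. y - c k) * (\<Prod>k<n. y - cnj (c k))"
    by (simp only: factor prod.distrib)
  also have "\<dots> = (Y - b ^ n) * (Y - cnj b ^ n)"
    using conj_prod prod_diff_rotations[OF n, of y b] by (simp add: c_def y_pow)
  also have "\<dots> = 2 * Y * complex_of_real (r ^ n * cos (real n * \<phi>) - Re (b ^ n))"
    using diff_mult_diff_cnj_on_circle[of "b ^ n" "r ^ n" "real n * \<phi>"]
    by (simp add: Y_def r_def norm_power)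
  finally have "complex_of_real (2 ^ n * poly (abscissa_poly n b) (r * cos \<phi>))
      = complex_of_real (2 * (r ^ n * cos (real n * \<phi>) - Re (b ^ n)))"
    using \<open>Y \<noteq> 0\<close> by (simp add: ac_simps)
  hence "2 ^ n * poly (abscissa_poly n b) (r * cos \<phi>) = 2 * (r ^ n * cos (real n * \<phi>) - Re (b ^ n))"
    by (simp only: of_real_eq_iff)
  moreover have "(2::real) ^ n = 2 * 2 ^ (n - 1)" using n by (cases n) simp_all
  ultimately show ?thesis by (simp add: r_def field_simps)
qed

lemma poly_eq_if_agree_on_infinite:
  fixes p q :: "'a::idom poly"
  assumes "infinite S" and "\<And>x. x \<in> S \<Longrightarrow> poly p x = poly q x"
  shows "p = q"
proof (rule ccontr)
  assume "p \<noteq> q"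
  hence "finite {x. poly (p - q) x = 0}" by (intro poly_roots_finite) simp
  moreover have "S \<subseteq> {x. poly (p - q) x = 0}" using assms(2) by auto
  ultimately show False using assms(1) finite_subset by blast
qed

lemma abscissa_poly_reflect:
  assumes n: "n > 0" and b: "b \<noteq> 0"
  defines "f \<equiv> abscissa_poly n b"
  shows "pcompose f [:0, -1:]
           = smult ((-1) ^ n) f + [:((-1) ^ n - 1) * Re (b ^ n) / 2 ^ (n - 1):]"
proof (rule poly_eq_if_agree_on_infinite)
  show "infinite {-norm b..norm b}" using b by simp
next
  fix x assume "x \<in> {-norm b..norm b}"
  hence "-1 \<le> x / norm b" "x / norm b \<le> 1" using b by (auto simp: field_simps)
  define \<phi> where "\<phi> = arccos (x / norm b)"
  have x: "x = norm b * cos \<phi>" using b \<open>-1 \<le> x / norm b\<close> \<open>x / norm b \<le> 1\<close>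
    by (simp add: \<phi>_def cos_arccos)
  have cos_shift: "cos (real n * (\<phi> + pi)) = (-1) ^ n * cos (real n * \<phi>)"
    by (simp add: distrib_left cos_add)
  have "poly (pcompose f [:0, -1:]) x = poly f (-x)" by (simp add: poly_pcompose)
  also have "-x = norm b * cos (\<phi> + pi)" using x by simp
  also have "poly f (norm b * cos (\<phi> + pi))
      = (-1) ^ n * poly f (norm b * cos \<phi>) + ((-1) ^ n - 1) * Re (b ^ n) / 2 ^ (n - 1)"
    unfolding f_def poly_abscissa_poly_cos[OF n b] cos_shift by (simp add: field_simps)
  also note x[symmetric]
  finally show "poly (pcompose f [:0, -1:]) x
      = poly (smult ((-1) ^ n) f + [:((-1) ^ n - 1) * Re (b ^ n) / 2 ^ (n - 1):]) x"
    by simp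
qed

lemma coeff_eq_0_if_reflect_const:
  fixes f :: "'a::{idom, ring_char_0} poly"
  assumes reflect: "pcompose f [:0, -1:] = smult ((-1) ^ n) f + [:c:]"
    and j: "0 < j" "odd (n - j)"
  shows "coeff f j = 0"
proof -
  have "(-1) ^ j * coeff f j = (-1) ^ n * coeff f j"
    using arg_cong[OF reflect, of "\<lambda>p. coeff p j"] j
    by (cases j) (simp_all add: coeff_pcompose_linear)
  moreover have "(-1 :: 'a) ^ n = - ((-1) ^ j)"
  proof -
    have "n = j + (n - j)" using j by (cases "j \<le> n") auto
    hence "(-1 :: 'a) ^ n = (-1) ^ j * (-1) ^ (n - j)" by (metis power_add)
    thus ?thesis using j by simp
  qed
  ultimately have "2 * ((-1) ^ j * coeff f j) = 0" by simp
  thus ?thesis by simp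
qed

lemma regular_ngon_abscissa_poly:
  assumes "regular_ngon_centered_origin n A"
  obtains b where "b \<noteq> 0" and "(\<Prod>k=1..n. [:- Re (A k), 1:]) = abscissa_poly n b"
proof -
  obtain \<sigma> :: real where A1: "A 1 \<noteq> 0" and \<sigma>: "\<sigma> = 1 \<or> \<sigma> = -1"
    and A: "\<And>k. k \<in> {1..n} \<Longrightarrow> A k = A 1 * cis (\<sigma> * 2 * pi * (real k - 1) / real n)"
    using assms unfolding regular_ngon_centered_origin_def by blast
  define b where "b = (if \<sigma> = 1 then A 1 else cnj (A 1))"
  have "Re (A k) = Re (b * cis (2 * pi * (real k - 1) / real n))" if "k \<in> {1..n}" for k
  proof (cases "\<sigma> = 1")
    case True
    thus ?thesis using A[OF that] by (simp add: b_def)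
  next
    case False
    hence "cnj (A k) = b * cis (2 * pi * (real k - 1) / real n)"
      using A[OF that] \<sigma> by (simp add: b_def cis_cnj)
    hence "Re (cnj (A k)) = Re (b * cis (2 * pi * (real k - 1) / real n))" by (rule arg_cong)
    thus ?thesis by simp
  qed
  hence "(\<Prod>k=1..n. [:- Re (A k), 1:])
      = (\<Prod>k=1..n. [:- Re (b * cis (2 * pi * (real k - 1) / real n)), 1:])"
    by (intro prod.cong) simp_all
  also have "\<dots> = abscissa_poly n b"
    by (simp add: abscissa_poly_def prod.atLeast1_atMost_eq)
  finally have "(\<Prod>k=1..n. [:- Re (A k), 1:]) = abscissa_poly n b" .
  moreover have "b \<noteq> 0" using A1 by (simp add: b_def)
  ultimately show thesis using that by blast
qed

theorem mainTheorem11: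
  fixes n :: nat and A :: "nat \<Rightarrow> complex" and f :: "real poly"
  assumes "n \<ge> 2"
    and "regular_ngon_centered_origin n A"
    and "f = (\<Prod>k=1..n. [:- Re (A k), 1:])"
  shows "\<forall>j. 0 < j \<and> j < n \<and> odd (n - j) \<longrightarrow> coeff f j = 0"
proof -
  obtain b where "b \<noteq> 0" and "f = abscissa_poly n b"
    using regular_ngon_abscissa_poly[OF assms(2)] assms(3) by metis
  with assms(1) have "pcompose f [:0, -1:]
      = smult ((-1) ^ n) f + [:((-1) ^ n - 1) * Re (b ^ n) / 2 ^ (n - 1):]"
    using abscissa_poly_reflect by simp
  thus ?thesis using coeff_eq_0_if_reflect_const by blast
qed

end
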